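(* Let $x_1,x_2,y_1,y_2\in\mathbb{R}^2$ be four points not all on one line, and let $\mu=\mu_1\delta_{x_1}+\mu_2\delta_{x_2}$, $\nu=\nu_1\delta_{y_1}+\nu_2\delta_{y_2}$ be probability measures with positive weights and $[\mu]=[\nu]=0$. Let $M=\sum_i\mu_i\,x_i\otimes x_i$, $N=\sum_j\nu_j\,y_j\otimes y_j$, and write $N-M=\lambda_a\,a\otimes a+\lambda_b\,b\otimes b$ with $\lambda_a<0<\lambda_b$ and $a,b$ orthonormal. For $i,j\in\{1,2\}$ set $i'=3-i$, $j'=3-j$ and $$\gamma_{ij}=\mu_i\,\frac{\langle b,y_{j'}-x_i\rangle}{\langle b,y_{j'}-y_j\rangle}.$$ Then the inequalities $$\langle x_2-y_2,y_1-x_1\rangle\ge0\quad\text{and}\quad\langle x_1-y_2,y_1-x_2\rangle\ge0$$ hold if and only if $\gamma_{ij}\ge0$ for all $i,j\in\{1,2\}$.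
   Context: $[\mu]=\int x\,\mu(dx)$. Under the hypotheses, $N-M$ has one negative and one positive eigenvalue, so the decomposition above exists; $\gamma_{ij}$ does not depend on the sign choice of $b$. *)

theory Defs
  imports "HOL-Analysis.Analysis"
begin

definition outer :: "real^2 \<Rightarrow> real^2 \<Rightarrow> real^2^2" where
  "outer u v = (\<chi> k l. u $ k * v $ l)"

end

theory Submission
  imports Defs
begin

text \<open>
  With \<open>p = x\<^sub>1 - x\<^sub>2\<close> and \<open>q = y\<^sub>1 - y\<^sub>2\<close> the centring conditions give
  \<open>x\<^sub>1 = \<mu>\<^sub>2 p\<close>, \<open>x\<^sub>2 = -\<mu>\<^sub>1 p\<close>, \<open>y\<^sub>1 = \<nu>\<^sub>2 q\<close>, \<open>y\<^sub>2 = -\<nu>\<^sub>1 q\<close>, hence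
  \<open>N - M = \<nu>\<^sub>1\<nu>\<^sub>2 q\<otimes>q - \<mu>\<^sub>1\<mu>\<^sub>2 p\<otimes>p\<close>. Pairing the eigen-equation \<open>(N - M) b = \<lambda>\<^sub>b b\<close>
  with \<open>b\<close>, \<open>p\<close> and \<open>q\<close> shows that the slope \<open>r = \<langle>p,b\<rangle> / \<langle>q,b\<rangle>\<close> is a root of
  \<open>f t = \<alpha> S t\<^sup>2 - (\<alpha> |p|\<^sup>2 + \<beta> |q|\<^sup>2) t + \<beta> S\<close>, where \<open>\<alpha> = \<mu>\<^sub>1\<mu>\<^sub>2\<close>, \<open>\<beta> = \<nu>\<^sub>1\<nu>\<^sub>2\<close>,
  \<open>S = \<langle>p,q\<rangle>\<close>, and that \<open>\<alpha> r\<^sup>2 < \<beta>\<close> because \<open>\<lambda>\<^sub>b > 0\<close>.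
  Non-collinearity is the strict Cauchy--Schwarz inequality \<open>S\<^sup>2 < |p|\<^sup>2 |q|\<^sup>2\<close>, which
  forces \<open>f\<close> to change sign only at \<open>r\<close> on the interval \<open>\<alpha> t\<^sup>2 \<le> \<beta>\<close>.
  The first inner product is \<open>-f(t)/t\<close> at both \<open>t = \<nu>\<^sub>2/\<mu>\<^sub>2\<close> and \<open>t = \<nu>\<^sub>1/\<mu>\<^sub>1\<close>; their
  product is \<open>\<beta>/\<alpha>\<close>, so the smaller one lies in that interval, and the inequality
  holds iff \<open>r\<close> is below both. The second inequality is the same statement with
  \<open>\<nu>\<^sub>1, \<nu>\<^sub>2, S, r\<close> replaced by \<open>\<nu>\<^sub>2, \<nu>\<^sub>1, -S, -r\<close>. Finally each \<open>\<gamma>\<^sub>i\<^sub>j\<close> is \<open>\<mu>\<^sub>i\<close> times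
  an affine function of \<open>r\<close>, and the four conditions \<open>\<gamma>\<^sub>i\<^sub>j \<ge> 0\<close> are exactly these
  four bounds on \<open>r\<close>.
\<close>

lemma centred_two_point_eq:
  fixes x1 x2 :: "'a::real_vector"
  assumes "m1 + m2 = 1" and "m1 *\<^sub>R x1 + m2 *\<^sub>R x2 = 0"
  shows "x1 = m2 *\<^sub>R (x1 - x2)" and "x2 = - m1 *\<^sub>R (x1 - x2)"
proof -
  have "x1 = (m1 + m2) *\<^sub>R x1 - (m1 *\<^sub>R x1 + m2 *\<^sub>R x2)" using assms by simp
  then show "x1 = m2 *\<^sub>R (x1 - x2)" by (simp add: algebra_simps)
  have "x2 = (m1 + m2) *\<^sub>R x2 - (m1 *\<^sub>R x1 + m2 *\<^sub>R x2)" using assms by simp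
  then show "x2 = - m1 *\<^sub>R (x1 - x2)" by (simp add: algebra_simps)
qed

lemma inner_square_less_if_not_collinear:
  fixes p q :: "'a::real_inner"
  assumes "\<not> collinear {c1 *\<^sub>R p, c2 *\<^sub>R p, d1 *\<^sub>R q, d2 *\<^sub>R q}"
  shows "(p \<bullet> q)\<^sup>2 < (p \<bullet> p) * (q \<bullet> q)"
proof -
  have "\<not> collinear {0, p, q}"
  proof
    assume "collinear {0, p, q}"
    then have "collinear (affine hull {0, p, q})"
      by (simp only: collinear_affine_hull_collinear)
    then have "collinear (span {0, p, q})"
      by (simp only: affine_hull_span_0[OF hull_inc[OF insertI1]])
    moreover have "{c1 *\<^sub>R p, c2 *\<^sub>R p, d1 *\<^sub>R q, d2 *\<^sub>R q} \<subseteq> span {0, p, q}"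
      by (simp add: span_base span_mul)
    ultimately show False
      using assms collinear_subset by blast
  qed
  then have "\<bar>p \<bullet> q\<bar> < norm p * norm q"
    using Cauchy_Schwarz_ineq2 norm_cauchy_schwarz_equal by (metis order_le_less)
  then have "\<bar>p \<bullet> q\<bar>\<^sup>2 < (norm p * norm q)\<^sup>2"
    by (intro power_strict_mono) auto
  then show ?thesis
    by (simp add: power_mult_distrib dot_square_norm)
qed

lemma outer_mult_vec: "outer u v *v w = (v \<bullet> w) *\<^sub>R u"
  by (simp add: vec_eq_iff outer_def matrix_vector_mult_def inner_vec_def sum_2 forall_2 algebra_simps)

lemma second_moment_centred_two_point:
  assumes "m 1 + m 2 = 1" and "m 1 *\<^sub>R x 1 + m 2 *\<^sub>R x 2 = 0"
  shows "(\<Sum>i\<in>{1::nat,2}. m i *\<^sub>R outer (x i) (x i)) = (m 1 * m 2) *\<^sub>R outer (x 1 - x 2) (x 1 - x 2)"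
proof -
  let ?p = "x 1 - x 2"
  have "(\<Sum>i\<in>{1::nat,2}. m i *\<^sub>R outer (x i) (x i))
      = m 1 *\<^sub>R outer (m 2 *\<^sub>R ?p) (m 2 *\<^sub>R ?p) + m 2 *\<^sub>R outer (- m 1 *\<^sub>R ?p) (- m 1 *\<^sub>R ?p)"
    using centred_two_point_eq[OF assms] by simp
  also have "\<dots> = (m 1 * m 2 * (m 1 + m 2)) *\<^sub>R outer ?p ?p"
    by (simp add: outer_def vec_eq_iff algebra_simps)
  finally show ?thesis
    using assms(1) by simp
qed

lemma outer_diff_eigenvector:
  assumes "c *\<^sub>R outer q q - d *\<^sub>R outer p p = la *\<^sub>R outer a a + lb *\<^sub>R outer b b"
    and "a \<bullet> b = 0" and "b \<bullet> b = 1"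
  shows "(c * (q \<bullet> b)) *\<^sub>R q - (d * (p \<bullet> b)) *\<^sub>R p = lb *\<^sub>R b"
proof -
  have "(c *\<^sub>R outer q q - d *\<^sub>R outer p p) *v b = (la *\<^sub>R outer a a + lb *\<^sub>R outer b b) *v b"
    using assms(1) by simp
  then show ?thesis
    using assms(2,3) by (simp add: matrix_vector_mult_diff_rdistrib matrix_vector_mult_add_rdistrib
        scaleR_matrix_vector_assoc[symmetric] outer_mult_vec)
qed

lemma slope_is_small_root:
  fixes p q b :: "'a::real_inner"
  assumes "0 < al" and "0 < lb" and "b \<noteq> 0"
    and eig: "(be * (q \<bullet> b)) *\<^sub>R q - (al * (p \<bullet> b)) *\<^sub>R p = lb *\<^sub>R b"
  defines "r \<equiv> (p \<bullet> b) / (q \<bullet> b)"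
  shows "q \<bullet> b \<noteq> 0" and "al * r\<^sup>2 < be"
    and "al * (p \<bullet> q) * r\<^sup>2 - (al * (p \<bullet> p) + be * (q \<bullet> q)) * r + be * (p \<bullet> q) = 0"
proof -
  have inner_eig: "be * (q \<bullet> b) * (q \<bullet> z) - al * (p \<bullet> b) * (p \<bullet> z) = lb * (b \<bullet> z)" for z
    using arg_cong[OF eig, of "\<lambda>v. v \<bullet> z"] by (simp add: inner_diff_left)
  have "0 < lb * (b \<bullet> b)"
    using assms by simp
  then have pos: "0 < be * (q \<bullet> b)\<^sup>2 - al * (p \<bullet> b)\<^sup>2"
    using inner_eig[of b] by (simp add: power2_eq_square inner_commute)
  show bq: "q \<bullet> b \<noteq> 0"
  proof
    assume "q \<bullet> b = 0"
    with pos have "al * (p \<bullet> b)\<^sup>2 < 0" by simp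
    with \<open>0 < al\<close> show False by (simp add: mult_less_0_iff)
  qed
  have bp: "p \<bullet> b = r * (q \<bullet> b)"
    using bq by (simp add: r_def)
  from pos have "0 < (q \<bullet> b)\<^sup>2 * (be - al * r\<^sup>2)"
    by (simp add: bp algebra_simps power_mult_distrib)
  then show "al * r\<^sup>2 < be"
    by (simp add: zero_less_mult_iff)
  have hp: "be * (q \<bullet> b) * (p \<bullet> q) - al * (p \<bullet> b) * (p \<bullet> p) = lb * (p \<bullet> b)"
    using inner_eig[of p] by (simp add: inner_commute)
  have hq: "be * (q \<bullet> b) * (q \<bullet> q) - al * (p \<bullet> b) * (p \<bullet> q) = lb * (q \<bullet> b)"
    using inner_eig[of q] by (simp add: inner_commute)
  have "(q \<bullet> b)\<^sup>2 * (al * (p \<bullet> q) * r\<^sup>2 - (al * (p \<bullet> p) + be * (q \<bullet> q)) * r + be * (p \<bullet> q))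
      = (q \<bullet> b) * (be * (q \<bullet> b) * (p \<bullet> q) - al * (p \<bullet> b) * (p \<bullet> p))
        - (p \<bullet> b) * (be * (q \<bullet> b) * (q \<bullet> q) - al * (p \<bullet> b) * (p \<bullet> q))"
    unfolding bp by (simp add: algebra_simps power2_eq_square)
  also have "\<dots> = 0"
    unfolding hp hq by simp
  finally show "al * (p \<bullet> q) * r\<^sup>2 - (al * (p \<bullet> p) + be * (q \<bullet> q)) * r + be * (p \<bullet> q) = 0"
    using bq by simp
qed

lemma quadratic_nonpos_iff_ge_small_root:
  fixes al be P Q S r t :: real
  assumes "0 < al" and "0 \<le> P" and "0 \<le> Q" and cauchy_schwarz: "S\<^sup>2 < P * Q"
    and small: "al * r\<^sup>2 < be" and "al * t\<^sup>2 \<le> be"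
    and root: "al * S * r\<^sup>2 - (al * P + be * Q) * r + be * S = 0"
  shows "al * S * t\<^sup>2 - (al * P + be * Q) * t + be * S \<le> 0 \<longleftrightarrow> r \<le> t"
proof -
  define h where "h = al * S * (t + r) - (al * P + be * Q)"
  have factor: "al * S * t\<^sup>2 - (al * P + be * Q) * t + be * S = (t - r) * h"
    using root unfolding h_def by (simp add: algebra_simps power2_eq_square)
  have PQ: "0 < P * Q"
    using cauchy_schwarz zero_le_power2[of S] by linarith
  have "0 \<le> al * r\<^sup>2"
    using \<open>0 < al\<close> by simp
  then have "0 < be"
    using small by linarith
  then have "0 \<le> al * P + be * Q"
    using assms by (intro add_nonneg_nonneg mult_nonneg_nonneg) auto
  have "al * (t + r)\<^sup>2 < 4 * be"
  proof -
    have "(t + r)\<^sup>2 \<le> 2 * t\<^sup>2 + 2 * r\<^sup>2"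
      using zero_le_power2[of "t - r"] by (simp add: power2_diff power2_sum)
    then have "al * (t + r)\<^sup>2 \<le> al * (2 * t\<^sup>2 + 2 * r\<^sup>2)"
      using \<open>0 < al\<close> by (simp add: mult_left_mono)
    then show ?thesis
      using assms by (simp add: algebra_simps)
  qed
  \<comment> \<open>strict Cauchy--Schwarz \<open>S\<^sup>2 < P * Q\<close> and AM--GM force \<open>h < 0\<close>\<close>
  have "(al * S * (t + r))\<^sup>2 = S\<^sup>2 * (al * (al * (t + r)\<^sup>2))"
    by (simp add: power_mult_distrib power2_eq_square)
  also have "\<dots> \<le> P * Q * (al * (al * (t + r)\<^sup>2))"
    using cauchy_schwarz \<open>0 < al\<close> by (intro mult_right_mono) auto
  also have "\<dots> < P * Q * (al * (4 * be))"
    using mult_strict_left_mono[OF mult_strict_left_mono[OF \<open>al * (t + r)\<^sup>2 < 4 * be\<close> \<open>0 < al\<close>] PQ] .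
  also have "\<dots> \<le> (al * P + be * Q)\<^sup>2"
    using zero_le_power2[of "al * P - be * Q"] by (simp add: power2_diff power2_sum algebra_simps)
  finally have "al * S * (t + r) < al * P + be * Q"
    using \<open>0 \<le> al * P + be * Q\<close> by (rule power2_less_imp_less)
  then have "h < 0"
    unfolding h_def by linarith
  then show ?thesis
    unfolding factor by (simp add: mult_le_0_iff)
qed

lemma cross_term_nonneg_iff:
  fixes m1 m2 n1 n2 P Q S r :: real
  assumes "0 < m1" "0 < m2" "0 < n1" "0 < n2"
    and "0 \<le> P" "0 \<le> Q" "S\<^sup>2 < P * Q"
    and "m1 * m2 * r\<^sup>2 < n1 * n2"
    and "m1 * m2 * S * r\<^sup>2 - (m1 * m2 * P + n1 * n2 * Q) * r + n1 * n2 * S = 0"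
  shows "0 \<le> m1 * m2 * P - (m1 * n2 + m2 * n1) * S + n1 * n2 * Q \<longleftrightarrow> m2 * r \<le> n2 \<and> m1 * r \<le> n1"
proof -
  define E where "E = m1 * m2 * P - (m1 * n2 + m2 * n1) * S + n1 * n2 * Q"
  define f where "f t = m1 * m2 * S * t\<^sup>2 - (m1 * m2 * P + n1 * n2 * Q) * t + n1 * n2 * S" for t
  define t where "t = min (n2 / m2) (n1 / m1)"
  have "0 < t"
    unfolding t_def using assms by simp
  have "f (n2 / m2) = - (n2 / m2) * E" and "f (n1 / m1) = - (n1 / m1) * E"
    unfolding f_def E_def using assms by (simp_all add: field_simps power2_eq_square)
  then have "f t = - t * E"
    by (simp add: t_def min_def)
  have "m1 * m2 * t\<^sup>2 \<le> m1 * m2 * ((n2 / m2) * (n1 / m1))"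
    unfolding power2_eq_square using assms \<open>0 < t\<close>
    by (intro mult_left_mono mult_mono) (auto simp: t_def)
  then have "m1 * m2 * t\<^sup>2 \<le> n1 * n2"
    using assms by (simp add: field_simps)
  then have "f t \<le> 0 \<longleftrightarrow> r \<le> t"
    unfolding f_def using assms by (intro quadratic_nonpos_iff_ge_small_root) simp_all
  then have "0 \<le> E \<longleftrightarrow> r \<le> t"
    using \<open>f t = - t * E\<close> \<open>0 < t\<close> by (simp add: zero_le_mult_iff)
  then show ?thesis
    unfolding E_def t_def using assms by (simp add: pos_le_divide_eq mult.commute)
qed

lemma cross_terms_nonneg_iff:
  fixes m1 m2 n1 n2 P Q S r :: real
  assumes "0 < m1" "0 < m2" "0 < n1" "0 < n2"
    and "0 \<le> P" "0 \<le> Q" and cauchy_schwarz: "S\<^sup>2 < P * Q"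
    and small: "m1 * m2 * r\<^sup>2 < n1 * n2"
    and root: "m1 * m2 * S * r\<^sup>2 - (m1 * m2 * P + n1 * n2 * Q) * r + n1 * n2 * S = 0"
  shows "(0 \<le> m1 * m2 * P - (m1 * n2 + m2 * n1) * S + n1 * n2 * Q
        \<and> 0 \<le> m1 * m2 * P + (m1 * n1 + m2 * n2) * S + n1 * n2 * Q)
    \<longleftrightarrow> m2 * r \<le> n2 \<and> m1 * r \<le> n1 \<and> - m2 * r \<le> n1 \<and> - m1 * r \<le> n2"
proof -
  have "m1 * m2 * (- r)\<^sup>2 < n2 * n1"
    and "m1 * m2 * (- S) * (- r)\<^sup>2 - (m1 * m2 * P + n2 * n1 * Q) * (- r) + n2 * n1 * (- S) = 0"
    using small root by (simp_all add: algebra_simps)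
  \<comment> \<open>the second cross term is the first one for the mirrored data \<open>n1 \<leftrightarrow> n2\<close>, \<open>S \<mapsto> - S\<close>, \<open>r \<mapsto> - r\<close>\<close>
  note mirrored = cross_term_nonneg_iff[of m1 m2 n2 n1 P Q "- S" "- r", OF assms(1,2,4,3,5,6) _ this]
  show ?thesis
    using cross_term_nonneg_iff[OF assms] mirrored cauchy_schwarz by (simp add: mult.commute[of n2 n1])
qed

lemma gamma_nonneg_iff:
  fixes x y :: "nat \<Rightarrow> 'a::real_inner"
  assumes x: "x 1 = \<mu> 2 *\<^sub>R p" "x 2 = - \<mu> 1 *\<^sub>R p" and y: "y 1 = \<nu> 2 *\<^sub>R q" "y 2 = - \<nu> 1 *\<^sub>R q"
    and mu_pos: "0 < \<mu> 1" "0 < \<mu> 2" and nu_prob: "\<nu> 1 + \<nu> 2 = 1" and bq: "q \<bullet> b \<noteq> 0"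
  defines "r \<equiv> (p \<bullet> b) / (q \<bullet> b)"
  shows "(\<forall>i\<in>{1::nat,2}. \<forall>j\<in>{1::nat,2}. \<mu> i * (b \<bullet> (y (3 - j) - x i)) / (b \<bullet> (y (3 - j) - y j)) \<ge> 0)
    \<longleftrightarrow> \<mu> 2 * r \<le> \<nu> 2 \<and> \<mu> 1 * r \<le> \<nu> 1 \<and> - \<mu> 2 * r \<le> \<nu> 1 \<and> - \<mu> 1 * r \<le> \<nu> 2"
proof -
  define s where "s = q \<bullet> b"
  have "p \<bullet> b = r * s"
    using bq by (simp add: r_def s_def)
  then have proj: "b \<bullet> x 1 = (\<mu> 2 * r) * s" "b \<bullet> x 2 = (- \<mu> 1 * r) * s"
    "b \<bullet> y 1 = \<nu> 2 * s" "b \<bullet> y 2 = (- \<nu> 1) * s"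
    unfolding x y s_def by (simp_all add: inner_commute)
  have expand: "(\<forall>i\<in>{1::nat,2}. \<forall>j\<in>{1::nat,2}. P i j) \<longleftrightarrow> P 1 1 \<and> P 1 2 \<and> P 2 1 \<and> P 2 2" for P
    by auto
  have index: "3 - 1 = (2::nat)" "3 - 2 = (1::nat)"
    by simp_all
  have denom: "- \<nu> 1 - \<nu> 2 = - 1" "\<nu> 2 - - \<nu> 1 = 1"
    using nu_prob by simp_all
  \<comment> \<open>every projection onto \<open>b\<close> is a multiple of \<open>s\<close>, which cancels in each ratio\<close>
  show ?thesis
    unfolding expand index inner_diff_right proj left_diff_distrib[symmetric] mult.assoc[symmetric]
      nonzero_mult_divide_mult_cancel_right[OF bq[folded s_def]] denom
    using mu_pos by (auto simp: zero_le_mult_iff mult_le_0_iff)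
qed

theorem lemma4p4:
  fixes x y :: "nat \<Rightarrow> real^2"
    and \<mu> \<nu> :: "nat \<Rightarrow> real"
    and a b :: "real^2"
    and la lb :: real
  assumes not_collinear: "\<not> collinear {x 1, x 2, y 1, y 2}"
    and mu_pos: "\<mu> 1 > 0" "\<mu> 2 > 0" and mu_prob: "\<mu> 1 + \<mu> 2 = 1"
    and nu_pos: "\<nu> 1 > 0" "\<nu> 2 > 0" and nu_prob: "\<nu> 1 + \<nu> 2 = 1"
    and mu_bary: "\<mu> 1 *\<^sub>R x 1 + \<mu> 2 *\<^sub>R x 2 = 0"
    and nu_bary: "\<nu> 1 *\<^sub>R y 1 + \<nu> 2 *\<^sub>R y 2 = 0"
    and decomp: "(\<Sum>j\<in>{1,2}. \<nu> j *\<^sub>R outer (y j) (y j))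
                 - (\<Sum>i\<in>{1,2}. \<mu> i *\<^sub>R outer (x i) (x i))
               = la *\<^sub>R outer a a + lb *\<^sub>R outer b b"
    and eig_signs: "la < 0" "0 < lb"
    and orthonormal: "a \<bullet> a = 1" "b \<bullet> b = 1" "a \<bullet> b = 0"
  shows "((x 2 - y 2) \<bullet> (y 1 - x 1) \<ge> 0 \<and> (x 1 - y 2) \<bullet> (y 1 - x 2) \<ge> 0)
     \<longleftrightarrow> (\<forall>i\<in>{1::nat,2}. \<forall>j\<in>{1::nat,2}.
            \<mu> i * (b \<bullet> (y (3 - j) - x i)) / (b \<bullet> (y (3 - j) - y j)) \<ge> 0)"
proof -
  define p where "p = x 1 - x 2"
  define q where "q = y 1 - y 2"
  note x = centred_two_point_eq[OF mu_prob mu_bary, folded p_def]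
  note y = centred_two_point_eq[OF nu_prob nu_bary, folded q_def]
  have "\<not> collinear {\<mu> 2 *\<^sub>R p, - \<mu> 1 *\<^sub>R p, \<nu> 2 *\<^sub>R q, - \<nu> 1 *\<^sub>R q}"
    using not_collinear unfolding x y .
  then have cauchy_schwarz: "(p \<bullet> q)\<^sup>2 < (p \<bullet> p) * (q \<bullet> q)"
    by (rule inner_square_less_if_not_collinear)
  have eig: "(\<nu> 1 * \<nu> 2 * (q \<bullet> b)) *\<^sub>R q - (\<mu> 1 * \<mu> 2 * (p \<bullet> b)) *\<^sub>R p = lb *\<^sub>R b"
    using decomp unfolding second_moment_centred_two_point[OF mu_prob mu_bary]
      second_moment_centred_two_point[OF nu_prob nu_bary] p_def[symmetric] q_def[symmetric]
    by (rule outer_diff_eigenvector[OF _ orthonormal(3,2)])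
  have "0 < \<mu> 1 * \<mu> 2" and "b \<noteq> 0"
    using mu_pos orthonormal by auto
  note slope = slope_is_small_root[OF this(1) eig_signs(2) this(2) eig]
  have "(x 2 - y 2) \<bullet> (y 1 - x 1)
      = \<mu> 1 * \<mu> 2 * (p \<bullet> p) - (\<mu> 1 * \<nu> 2 + \<mu> 2 * \<nu> 1) * (p \<bullet> q) + \<nu> 1 * \<nu> 2 * (q \<bullet> q)"
    and "(x 1 - y 2) \<bullet> (y 1 - x 2)
      = \<mu> 1 * \<mu> 2 * (p \<bullet> p) + (\<mu> 1 * \<nu> 1 + \<mu> 2 * \<nu> 2) * (p \<bullet> q) + \<nu> 1 * \<nu> 2 * (q \<bullet> q)"
    unfolding x y by (simp_all add: inner_diff_left inner_diff_right inner_commute algebra_simps)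
  then show ?thesis
    unfolding gamma_nonneg_iff[OF x y mu_pos nu_prob slope(1)]
    using cross_terms_nonneg_iff[OF mu_pos nu_pos inner_ge_zero inner_ge_zero cauchy_schwarz slope(2,3)]
    by simp
qed

end
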